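(* Let $\gamma > \sqrt{2}$ and let $I$ be a $\gamma$-stable instance of the Euclidean Steiner tree problem with optimal Steiner tree $\mathrm{OPT}$. If $a_1, a_2$ are distinct terminals and $b$ is a Steiner point such that $a_1 b$ and $a_2 b$ are both edges of $\mathrm{OPT}$, then the angle $\theta = \angle a_1 b a_2$ satisfies $\theta > \pi/2$.
   Context: An instance of the Euclidean Steiner tree problem consists of a finite set $V \subset \mathbb{R}^d$, a set $T \subseteq V$ of terminals, and the complete graph on $V$ with edge weights $w_{uv} = \|u - v\|$. Points of $V \setminus T$ are Steiner points. A Steiner tree is a tree in this complete graph whose vertex set contains all of $T$; its weight is the sum of its edge weights. For $\gamma > 1$, the instance is $\gamma$-stable if it has a minimum-weight Steiner tree $\mathrm{OPT}$ such that for every $w' : V \times V \to \mathbb{R}_{\ge 0}$ with $w_{uv} \le w'_{uv} \le \gamma w_{uv}$ for all $u,v$, every minimum-weight Steiner tree with respect to $w'$ equals $\mathrm{OPT}$ (the $w'$ need not be Euclidean). $\angle a_1 b a_2 \in [0,\pi]$ is the angle at $b$ between the vectors $a_1 - b$ and $a_2 - b$. *)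

theory Defs
  imports "HOL-Analysis.Analysis"
begin

text \<open>A (sub)tree of the complete graph on a vertex set V is a pair (S, E) with
  S the vertex set and E a set of edges, each edge a 2-element subset of S.\<close>

definition graph_edges :: "'a set \<Rightarrow> 'a set set" where
  "graph_edges S = {e. \<exists>u v. u \<in> S \<and> v \<in> S \<and> u \<noteq> v \<and> e = {u, v}}"

definition connected_graph :: "'a set \<Rightarrow> 'a set set \<Rightarrow> bool" where
  "connected_graph S E \<longleftrightarrow>
     (\<forall>u\<in>S. \<forall>v\<in>S. (u, v) \<in> ({(x, y). {x, y} \<in> E})\<^sup>*)"

definition is_tree :: "'a set \<Rightarrow> 'a set set \<Rightarrow> bool" where
  "is_tree S E \<longleftrightarrow> finite S \<and> S \<noteq> {} \<and> E \<subseteq> graph_edges S \<and>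
     connected_graph S E \<and> card E = card S - 1"

definition steiner_tree :: "'a set \<Rightarrow> 'a set \<Rightarrow> 'a set \<times> 'a set set \<Rightarrow> bool" where
  "steiner_tree V T t \<longleftrightarrow> fst t \<subseteq> V \<and> T \<subseteq> fst t \<and> is_tree (fst t) (snd t)"

definition tree_weight :: "('a \<Rightarrow> 'a \<Rightarrow> real) \<Rightarrow> 'a set \<times> 'a set set \<Rightarrow> real" where
  "tree_weight w t = (\<Sum>e\<in>snd t. THE r. \<exists>u v. e = {u, v} \<and> u \<noteq> v \<and> r = w u v)"

definition min_steiner_tree ::
  "'a set \<Rightarrow> 'a set \<Rightarrow> ('a \<Rightarrow> 'a \<Rightarrow> real) \<Rightarrow> 'a set \<times> 'a set set \<Rightarrow> bool" where
  "min_steiner_tree V T w t \<longleftrightarrow> steiner_tree V T t \<and>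
     (\<forall>t'. steiner_tree V T t' \<longrightarrow> tree_weight w t \<le> tree_weight w t')"

definition euclid_w :: "'a::real_normed_vector \<Rightarrow> 'a \<Rightarrow> real" where
  "euclid_w u v = norm (u - v)"

definition gamma_stable ::
  "real \<Rightarrow> 'a::real_normed_vector set \<Rightarrow> 'a set \<Rightarrow> 'a set \<times> 'a set set \<Rightarrow> bool" where
  "gamma_stable \<gamma> V T OPT \<longleftrightarrow> min_steiner_tree V T euclid_w OPT \<and>
     (\<forall>w'. (\<forall>u\<in>V. \<forall>v\<in>V. w' u v = w' v u \<and>
              euclid_w u v \<le> w' u v \<and> w' u v \<le> \<gamma> * euclid_w u v) \<longrightarrow>
        (\<forall>t. min_steiner_tree V T w' t \<longrightarrow> t = OPT))"

definition vangle :: "'a::euclidean_space \<Rightarrow> 'a \<Rightarrow> 'a \<Rightarrow> real" where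
  "vangle a1 b a2 = arccos (((a1 - b) \<bullet> (a2 - b)) / (norm (a1 - b) * norm (a2 - b)))"

end

theory Submission
  imports Defs
begin

text \<open>Suppose the angle at \<open>b\<close> were at most \<open>\<pi>/2\<close>, and let \<open>a\<^sub>2 b\<close> be the longer of the two
  edges. Then \<open>|a\<^sub>1 - a\<^sub>2| \<le> \<surd>2 |a\<^sub>2 - b| < \<gamma> |a\<^sub>2 - b|\<close>. Stretching the edge \<open>a\<^sub>2 b\<close> by
  the factor \<open>\<gamma>\<close> is an admissible perturbation, and afterwards exchanging \<open>a\<^sub>2 b\<close> for
  \<open>a\<^sub>1 a\<^sub>2\<close> yields a strictly lighter Steiner tree; so the perturbed instance has a
  minimum Steiner tree different from OPT, contradicting stability.\<close>

lemma graph_edges_subset_Pow: "graph_edges S \<subseteq> Pow S"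
  unfolding graph_edges_def by auto

lemma finite_edges: "finite S \<Longrightarrow> E \<subseteq> graph_edges S \<Longrightarrow> finite E"
  using graph_edges_subset_Pow by (metis finite_Pow_iff finite_subset)

lemma connected_graph_crossing_edge:
  assumes "connected_graph S E" "R \<subseteq> S" "r \<in> R" "s \<in> S" "s \<notin> R"
  shows "\<exists>x y. x \<in> R \<and> y \<notin> R \<and> {x, y} \<in> E"
proof -
  have "(r, s) \<in> {(x, y). {x, y} \<in> E}\<^sup>*"
    using assms unfolding connected_graph_def by blast
  then show ?thesis
    using \<open>r \<in> R\<close> \<open>s \<notin> R\<close> by (induction rule: rtrancl_induct) auto
qed

text \<open>The vertex set is grown one vertex at a time along a crossing edge.\<close>

lemma connected_graph_spanned_edges:
  assumes "finite S" "E \<subseteq> graph_edges S" "connected_graph S E" "S \<noteq> {}" "n < card S"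
  shows "\<exists>R\<subseteq>S. card R = n + 1 \<and> n \<le> card {e\<in>E. e \<subseteq> R}"
  using \<open>n < card S\<close>
proof (induction n)
  case 0
  then obtain s where "s \<in> S" using \<open>S \<noteq> {}\<close> by auto
  then show ?case by (intro exI[of _ "{s}"]) auto
next
  case (Suc n)
  then obtain R where R: "R \<subseteq> S" "card R = n + 1" "n \<le> card {e\<in>E. e \<subseteq> R}"
    by auto
  have "finite R" using R(1) \<open>finite S\<close> finite_subset by blast
  have "\<not> S \<subseteq> R"
    using card_mono[OF \<open>finite R\<close>, of S] R(2) Suc.prems by linarith
  then obtain s where s: "s \<in> S" "s \<notin> R" by blast
  obtain r where "r \<in> R" using R(2) by fastforce
  obtain x y where xy: "x \<in> R" "y \<notin> R" "{x, y} \<in> E"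
    using connected_graph_crossing_edge[OF assms(3) R(1) \<open>r \<in> R\<close> s] by blast
  have "y \<in> S" using xy(3) assms(2) graph_edges_subset_Pow by blast
  have finE: "finite E" using finite_edges[OF assms(1,2)] .
  have "insert {x, y} {e\<in>E. e \<subseteq> R} \<subseteq> {e\<in>E. e \<subseteq> insert y R}"
    using xy by auto
  then have "card (insert {x, y} {e\<in>E. e \<subseteq> R}) \<le> card {e\<in>E. e \<subseteq> insert y R}"
    using finE by (intro card_mono) auto
  moreover have "{x, y} \<notin> {e\<in>E. e \<subseteq> R}" using xy by auto
  ultimately have "Suc n \<le> card {e\<in>E. e \<subseteq> insert y R}"
    using R(3) finE by simp
  moreover have "card (insert y R) = Suc n + 1" using R(2) xy(2) \<open>finite R\<close> by simp
  ultimately show ?case using R(1) \<open>y \<in> S\<close> by blast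
qed

lemma connected_graph_card_vertices_le:
  assumes "finite S" "E \<subseteq> graph_edges S" "connected_graph S E" "S \<noteq> {}"
  shows "card S \<le> card E + 1"
proof -
  have "card S - 1 < card S" using assms(1,4) by (simp add: card_gt_0_iff)
  then obtain R where "card S - 1 \<le> card {e\<in>E. e \<subseteq> R}"
    using connected_graph_spanned_edges[OF assms] by blast
  moreover have "card {e\<in>E. e \<subseteq> R} \<le> card E"
    using finite_edges[OF assms(1,2)] by (intro card_mono) auto
  ultimately show ?thesis by linarith
qed

lemma connected_graph_exchange:
  assumes "connected_graph S E" "{a, b} \<in> E" "a \<noteq> c"
  shows "connected_graph S (insert {a, c} (E - {{c, b}}))"
proof -
  let ?adj = "\<lambda>E. {(x, y). {x, y} \<in> E}"
  let ?E' = "insert {a, c} (E - {{c, b}})"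
  have "{a, b} \<in> ?E'" using assms(2,3) by (auto simp: doubleton_eq_iff)
  then have "(a, b) \<in> ?adj ?E'" "(b, a) \<in> ?adj ?E'" "(a, c) \<in> ?adj ?E'" "(c, a) \<in> ?adj ?E'"
    by (simp_all add: insert_commute)
  then have detour: "(c, b) \<in> (?adj ?E')\<^sup>*" "(b, c) \<in> (?adj ?E')\<^sup>*"
    by (meson converse_rtrancl_into_rtrancl r_into_rtrancl)+
  have "(x, y) \<in> (?adj ?E')\<^sup>*" if "{x, y} \<in> E" for x y
  proof (cases "{x, y} = {c, b}")
    case True
    then show ?thesis using detour by (auto simp: doubleton_eq_iff)
  next
    case False
    then show ?thesis using that by auto
  qed
  then have "(?adj E)\<^sup>* \<subseteq> (?adj ?E')\<^sup>*"
    by (intro rtrancl_subset_rtrancl) auto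
  then show ?thesis
    using assms(1) unfolding connected_graph_def by blast
qed

lemma is_treeD:
  assumes "is_tree S E"
  shows "finite S" "S \<noteq> {}" "E \<subseteq> graph_edges S" "connected_graph S E"
    "card E = card S - 1" "finite E"
proof -
  show "finite S" "S \<noteq> {}" "E \<subseteq> graph_edges S" "connected_graph S E" "card E = card S - 1"
    using assms unfolding is_tree_def by auto
  then show "finite E" using finite_edges by blast
qed

lemma is_tree_edge_endpoints: "is_tree S E \<Longrightarrow> {u, v} \<in> E \<Longrightarrow> u \<in> S \<and> v \<in> S \<and> u \<noteq> v"
  unfolding is_tree_def graph_edges_def by (auto simp: doubleton_eq_iff)

text \<open>Otherwise \<open>{c, b}\<close> could be deleted without disconnecting the tree.\<close>

lemma is_tree_no_triangle:
  assumes "is_tree S E" "{a, b} \<in> E" "{c, b} \<in> E" "a \<noteq> c"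
  shows "{a, c} \<notin> E"
proof
  assume "{a, c} \<in> E"
  moreover have "a \<noteq> b" using is_tree_edge_endpoints[OF assms(1,2)] by blast
  then have "{a, c} \<noteq> {c, b}" using assms(4) by (simp add: doubleton_eq_iff)
  ultimately have "{a, c} \<in> E - {{c, b}}" by blast
  then have "insert {a, c} (E - {{c, b}}) = E - {{c, b}}" by (rule insert_absorb)
  then have "connected_graph S (E - {{c, b}})"
    using connected_graph_exchange[OF is_treeD(4)[OF assms(1)] assms(2,4)] by simp
  moreover have "E - {{c, b}} \<subseteq> graph_edges S" using is_treeD(3)[OF assms(1)] by blast
  ultimately have "card S \<le> card (E - {{c, b}}) + 1"
    using connected_graph_card_vertices_le is_treeD(1,2)[OF assms(1)] by blast
  moreover have "card (E - {{c, b}}) < card E"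
    using card_Diff1_less[OF is_treeD(6)[OF assms(1)] assms(3)] .
  moreover have "card S > 0"
    using is_treeD(1,2)[OF assms(1)] by (simp add: card_gt_0_iff)
  ultimately show False
    using is_treeD(5)[OF assms(1)] by arith
qed

lemma is_tree_exchange:
  assumes "is_tree S E" "{a, b} \<in> E" "{c, b} \<in> E" "a \<noteq> c"
  shows "is_tree S (insert {a, c} (E - {{c, b}}))"
proof -
  have "a \<in> S" "c \<in> S"
    using is_tree_edge_endpoints[OF assms(1,2)] is_tree_edge_endpoints[OF assms(1,3)] by simp_all
  then have "{a, c} \<in> graph_edges S" using assms(4) unfolding graph_edges_def by blast
  then have "insert {a, c} (E - {{c, b}}) \<subseteq> graph_edges S"
    using is_treeD(3)[OF assms(1)] by blast
  moreover have "card (insert {a, c} (E - {{c, b}})) = card E"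
    using is_tree_no_triangle[OF assms] card_Suc_Diff1[OF is_treeD(6)[OF assms(1)] assms(3)]
      is_treeD(6)[OF assms(1)]
    by (simp del: card_Diff_insert card_Diff_singleton)
  moreover note connected_graph_exchange[OF is_treeD(4)[OF assms(1)] assms(2,4)]
  ultimately show ?thesis
    using is_treeD(1,2,5)[OF assms(1)] unfolding is_tree_def by simp
qed

definition edge_weight :: "('a \<Rightarrow> 'a \<Rightarrow> real) \<Rightarrow> 'a set \<Rightarrow> real" where
  "edge_weight w e = (THE r. \<exists>u v. e = {u, v} \<and> u \<noteq> v \<and> r = w u v)"

lemma tree_weight_eq_sum: "tree_weight w t = (\<Sum>e\<in>snd t. edge_weight w e)"
  unfolding tree_weight_def edge_weight_def ..

lemma edge_weight_doubleton:
  assumes "u \<noteq> v" "w u v = w v u"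
  shows "edge_weight w {u, v} = w u v"
  unfolding edge_weight_def
  using assms by (intro the_equality) (auto simp: doubleton_eq_iff)

lemma edge_weight_euclid: "u \<noteq> v \<Longrightarrow> edge_weight euclid_w {u, v} = norm (u - v)"
  by (simp add: edge_weight_doubleton euclid_w_def norm_minus_commute)

lemma tree_weight_exchange:
  assumes "finite E" "f \<in> E" "g \<notin> E"
  shows "tree_weight w (S, insert g (E - {f})) =
    tree_weight w (S, E) - edge_weight w f + edge_weight w g"
  using assms by (simp add: tree_weight_eq_sum sum_diff1)

definition raise_edge :: "('a \<Rightarrow> 'a \<Rightarrow> real) \<Rightarrow> 'a set \<Rightarrow> real \<Rightarrow> 'a \<Rightarrow> 'a \<Rightarrow> real" where
  "raise_edge w f c u v = w u v + (if {u, v} = f then c else 0)"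

lemma raise_edge_sym: "(\<And>u v. w u v = w v u) \<Longrightarrow> raise_edge w f c u v = raise_edge w f c v u"
  unfolding raise_edge_def by (simp add: insert_commute)

lemma tree_weight_raise_edge:
  assumes "\<And>u v. w u v = w v u" "finite (snd t)" "snd t \<subseteq> graph_edges S"
  shows "tree_weight (raise_edge w f c) t = tree_weight w t + (if f \<in> snd t then c else 0)"
proof -
  have "edge_weight (raise_edge w f c) e = edge_weight w e + (if e = f then c else 0)"
    if edge: "e \<in> snd t" for e
  proof -
    obtain u v where "e = {u, v}" "u \<noteq> v"
      using edge assms(3) unfolding graph_edges_def by blast
    then show ?thesis
      using assms(1) raise_edge_sym[of w]
      by (simp add: edge_weight_doubleton raise_edge_def)
  qed
  then have "tree_weight (raise_edge w f c) t =
      (\<Sum>e\<in>snd t. edge_weight w e) + (\<Sum>e\<in>snd t. if e = f then c else 0)"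
    by (simp add: tree_weight_eq_sum sum.distrib)
  then show ?thesis
    using assms(2) by (simp add: tree_weight_eq_sum)
qed

definition admissible_perturbation :: "real \<Rightarrow> 'a::real_normed_vector set \<Rightarrow> ('a \<Rightarrow> 'a \<Rightarrow> real) \<Rightarrow> bool" where
  "admissible_perturbation \<gamma> V w' \<longleftrightarrow> (\<forall>u\<in>V. \<forall>v\<in>V. w' u v = w' v u \<and>
     euclid_w u v \<le> w' u v \<and> w' u v \<le> \<gamma> * euclid_w u v)"

lemma admissible_raise_edge:
  assumes "\<gamma> \<ge> 1"
  shows "admissible_perturbation \<gamma> V (raise_edge euclid_w {p, q} ((\<gamma> - 1) * norm (p - q)))"
  unfolding admissible_perturbation_def
proof (intro ballI conjI)
  fix u v :: 'a
  let ?w' = "raise_edge euclid_w {p, q} ((\<gamma> - 1) * norm (p - q))"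
  show "?w' u v = ?w' v u"
    by (rule raise_edge_sym) (simp add: euclid_w_def norm_minus_commute)
  show "euclid_w u v \<le> ?w' u v"
    using assms by (simp add: raise_edge_def)
  show "?w' u v \<le> \<gamma> * euclid_w u v"
  proof (cases "{u, v} = {p, q}")
    case True
    then have "norm (u - v) = norm (p - q)"
      by (auto simp: doubleton_eq_iff norm_minus_commute)
    then show ?thesis
      using True by (simp add: raise_edge_def euclid_w_def algebra_simps)
  next
    case False
    then show ?thesis
      using assms by (simp add: raise_edge_def euclid_w_def mult_le_cancel_right1)
  qed
qed

lemma min_steiner_tree_exists:
  assumes "finite V" "steiner_tree V T t"
  obtains t0 where "min_steiner_tree V T w t0"
proof -
  let ?ST = "{t. steiner_tree V T t}"
  have "?ST \<subseteq> Pow V \<times> Pow (Pow V)"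
  proof
    fix t assume "t \<in> ?ST"
    then have "fst t \<subseteq> V" "snd t \<subseteq> graph_edges (fst t)"
      unfolding steiner_tree_def using is_treeD(3) by auto
    moreover from this have "snd t \<subseteq> Pow V"
      using graph_edges_subset_Pow[of "fst t"] by blast
    ultimately show "t \<in> Pow V \<times> Pow (Pow V)" by (simp add: mem_Times_iff)
  qed
  then have "finite ?ST" using assms(1) by (auto intro: finite_subset)
  define t0 where "t0 = arg_min_on (tree_weight w) ?ST"
  have "t0 \<in> ?ST" "\<not> (\<exists>t\<in>?ST. tree_weight w t < tree_weight w t0)"
    using arg_min_if_finite[OF \<open>finite ?ST\<close>] assms(2) unfolding t0_def by blast+
  then show ?thesis
    using that unfolding min_steiner_tree_def by (auto simp: not_less)
qed

text \<open>A \<open>w'\<close>-minimum Steiner tree exists as \<open>V\<close> is finite, and stability forces it to be OPT.\<close>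

lemma gamma_stable_min_perturbed:
  assumes "finite V" "gamma_stable \<gamma> V T OPT" "admissible_perturbation \<gamma> V w'"
    and "steiner_tree V T t"
  shows "tree_weight w' OPT \<le> tree_weight w' t"
proof -
  obtain t0 where "min_steiner_tree V T w' t0"
    using min_steiner_tree_exists[OF assms(1,4)] .
  moreover from this have "t0 = OPT"
    using assms(2,3) unfolding gamma_stable_def admissible_perturbation_def by blast
  ultimately show ?thesis
    using assms(4) unfolding min_steiner_tree_def by blast
qed

lemma tree_weight_exchange_raised:
  assumes tree: "is_tree S E" and edges: "{a1, b} \<in> E" "{a2, b} \<in> E" and "a1 \<noteq> a2"
    and short: "norm (a1 - a2) < \<gamma> * norm (a2 - b)"
  defines "w' \<equiv> raise_edge euclid_w {a2, b} ((\<gamma> - 1) * norm (a2 - b))"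
  shows "tree_weight w' (S, insert {a1, a2} (E - {{a2, b}})) < tree_weight w' (S, E)"
proof -
  let ?E' = "insert {a1, a2} (E - {{a2, b}})"
  have "a1 \<noteq> b" "a2 \<noteq> b"
    using is_tree_edge_endpoints[OF tree] edges by blast+
  have sym: "euclid_w u v = euclid_w v u" for u v :: 'a
    by (simp add: euclid_w_def norm_minus_commute)
  have tree': "is_tree S ?E'" using is_tree_exchange[OF tree edges \<open>a1 \<noteq> a2\<close>] .
  have "{a2, b} \<notin> ?E'"
    using \<open>a1 \<noteq> b\<close> by (auto simp: doubleton_eq_iff)
  then have "tree_weight w' (S, ?E') = tree_weight euclid_w (S, ?E')"
    unfolding w'_def using tree_weight_raise_edge[OF sym, of "(S, ?E')"] is_treeD(6,3)[OF tree']
    by simp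
  also have "\<dots> = tree_weight euclid_w (S, E) - edge_weight euclid_w {a2, b}
      + edge_weight euclid_w {a1, a2}"
    using is_treeD(6)[OF tree] edges(2) is_tree_no_triangle[OF tree edges \<open>a1 \<noteq> a2\<close>]
    by (rule tree_weight_exchange)
  also have "\<dots> = tree_weight euclid_w (S, E) - norm (a2 - b) + norm (a1 - a2)"
    using \<open>a2 \<noteq> b\<close> \<open>a1 \<noteq> a2\<close> by (simp add: edge_weight_euclid)
  also have "\<dots> < tree_weight euclid_w (S, E) + (\<gamma> - 1) * norm (a2 - b)"
    using short by (simp add: algebra_simps)
  also have "\<dots> = tree_weight w' (S, E)"
    unfolding w'_def using tree_weight_raise_edge[OF sym, of "(S, E)" S] is_treeD(6,3)[OF tree] edges(2)
    by simp
  finally show ?thesis .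
qed

lemma gamma_stable_adjacent_edges:
  assumes "finite V" "\<gamma> \<ge> 1" "gamma_stable \<gamma> V T OPT"
    and "{a1, b} \<in> snd OPT" "{a2, b} \<in> snd OPT" "a1 \<noteq> a2"
  shows "\<gamma> * norm (a2 - b) \<le> norm (a1 - a2)"
proof (rule ccontr)
  assume "\<not> \<gamma> * norm (a2 - b) \<le> norm (a1 - a2)"
  then have short: "norm (a1 - a2) < \<gamma> * norm (a2 - b)" by simp
  obtain S E where OPT: "OPT = (S, E)" by fastforce
  have "steiner_tree V T OPT"
    using assms(3) unfolding gamma_stable_def min_steiner_tree_def by blast
  then have tree: "is_tree S E" and "S \<subseteq> V" "T \<subseteq> S"
    unfolding OPT steiner_tree_def by auto
  have edges: "{a1, b} \<in> E" "{a2, b} \<in> E" using assms(4,5) OPT by auto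
  let ?E' = "insert {a1, a2} (E - {{a2, b}})"
  let ?w' = "raise_edge euclid_w {a2, b} ((\<gamma> - 1) * norm (a2 - b))"
  have "steiner_tree V T (S, ?E')"
    using is_tree_exchange[OF tree edges assms(6)] \<open>S \<subseteq> V\<close> \<open>T \<subseteq> S\<close>
    unfolding steiner_tree_def by simp
  with gamma_stable_min_perturbed[OF assms(1,3) admissible_raise_edge[OF assms(2)]]
  have "tree_weight ?w' OPT \<le> tree_weight ?w' (S, ?E')" .
  with tree_weight_exchange_raised[OF tree edges assms(6) short] show False
    unfolding OPT by linarith
qed

lemma norm_diff_le_sqrt2_max:
  fixes x y :: "'a::real_inner"
  assumes "x \<bullet> y \<ge> 0"
  shows "norm (x - y) \<le> sqrt 2 * max (norm x) (norm y)"
proof (rule power2_le_imp_le)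
  have "(norm (x - y))\<^sup>2 = (norm x)\<^sup>2 + (norm y)\<^sup>2 - 2 * (x \<bullet> y)"
    by (simp add: power2_norm_eq_inner inner_diff inner_commute)
  also have "\<dots> \<le> 2 * (max (norm x) (norm y))\<^sup>2"
  proof -
    have "(norm x)\<^sup>2 \<le> (max (norm x) (norm y))\<^sup>2" "(norm y)\<^sup>2 \<le> (max (norm x) (norm y))\<^sup>2"
      by (simp_all add: power_mono)
    then show ?thesis using assms by linarith
  qed
  also have "\<dots> = (sqrt 2 * max (norm x) (norm y))\<^sup>2"
    by (simp add: power_mult_distrib)
  finally show "(norm (x - y))\<^sup>2 \<le> (sqrt 2 * max (norm x) (norm y))\<^sup>2" .
qed (simp add: le_max_iff_disj)

lemma arccos_inner_gt_pi_half:
  fixes x y :: "'a::real_inner"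
  assumes "x \<bullet> y < 0"
  shows "arccos ((x \<bullet> y) / (norm x * norm y)) > pi / 2"
proof -
  have "x \<noteq> 0" "y \<noteq> 0" using assms by auto
  then have "norm x * norm y > 0" by simp
  moreover have "\<bar>x \<bullet> y\<bar> \<le> norm x * norm y" by (rule Cauchy_Schwarz_ineq2)
  ultimately have "- 1 \<le> (x \<bullet> y) / (norm x * norm y)" "(x \<bullet> y) / (norm x * norm y) < 0"
    using assms by (simp_all add: field_simps divide_neg_pos)
  then show ?thesis
    using arccos_less_arccos[of _ 0] by simp
qed

theorem mainTheorem11:
  fixes V T :: "'a::euclidean_space set" and OPT :: "'a set \<times> 'a set set"
    and \<gamma> :: real and a1 a2 b :: 'a
  assumes "finite V" and "T \<subseteq> V"
    and "\<gamma> > sqrt 2"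
    and "gamma_stable \<gamma> V T OPT"
    and "a1 \<in> T" and "a2 \<in> T" and "a1 \<noteq> a2"
    and "b \<in> V - T"
    and "{a1, b} \<in> snd OPT" and "{a2, b} \<in> snd OPT"
  shows "vangle a1 b a2 > pi / 2"
proof -
  have "1 < sqrt (2::real)" by simp
  then have "\<gamma> \<ge> 1" using \<open>\<gamma> > sqrt 2\<close> by linarith
  note adjacent = gamma_stable_adjacent_edges[OF assms(1) \<open>\<gamma> \<ge> 1\<close> assms(4)]
  let ?m = "max (norm (a1 - b)) (norm (a2 - b))"
  have "\<gamma> * norm (a2 - b) \<le> norm (a1 - a2)"
    using adjacent[OF assms(9,10,7)] .
  moreover have "\<gamma> * norm (a1 - b) \<le> norm (a1 - a2)"
    using adjacent[OF assms(10,9) assms(7)[symmetric]] by (simp add: norm_minus_commute)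
  ultimately have long: "\<gamma> * ?m \<le> norm (a1 - a2)" by (simp add: max_def)
  have "?m > 0" using assms(6,8) by (auto simp: max_def)
  have "(a1 - b) \<bullet> (a2 - b) < 0"
  proof (rule ccontr)
    assume "\<not> (a1 - b) \<bullet> (a2 - b) < 0"
    then have "norm (a1 - a2) \<le> sqrt 2 * ?m"
      using norm_diff_le_sqrt2_max[of "a1 - b" "a2 - b"] by simp
    also have "\<dots> < \<gamma> * ?m" using \<open>?m > 0\<close> \<open>\<gamma> > sqrt 2\<close> by simp
    finally show False using long by simp
  qed
  then show ?thesis
    unfolding vangle_def by (rule arccos_inner_gt_pi_half)
qed

end
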